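(* Let $[0,1,\dots,k]$ be a hierarchical-leadership flock, and let $x_i,v_i:[0,\infty)\to\mathbb{R}^3$ ($0\le i\le k$) satisfy \[\dot x_i=v_i,\qquad \dot v_i=\sum_{j\in\mathcal{L}(i)}a_{ij}(x)(v_j-v_i),\qquad i=1,\dots,k,\] \[\dot x_0=v_0,\qquad \dot v_0=f(t),\qquad t>0,\] with $a_{ij}(x)=H/(1+|x_i-x_j|^2)^{\beta}$ for $j\in\mathcal{L}(i)$, where $H>0$ and $0<\beta<1/2$, and $|f(t)|=O((1+t)^{-\mu})$ with $\mu>k+1$. Then there exist constant vectors $d_{ij}\in\mathbb{R}^3$, $0\le i,j\le k$, such that \[\lim_{t\to\infty}\big(x_i(t)-x_j(t)\big)=d_{ij}\quad\text{for all }0\le i,j\le k,\] with convergence rate $O\big((1+t)^{-(\mu-k-1)}\big)$.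
   Context: A flock $[0,1,\dots,k]$ is under hierarchical leadership if $j\in\mathcal{L}(i)$ (agent $i$ is led by agent $j$) only if $j<i$, and every agent $i>0$ has a nonempty leader set $\mathcal{L}(i)$. *)

theory Defs
  imports "HOL-Analysis.Analysis"
begin

definition hierarchical_leadership :: "nat \<Rightarrow> (nat \<Rightarrow> nat set) \<Rightarrow> bool" where
  "hierarchical_leadership k L \<longleftrightarrow>
     (\<forall>i\<le>k. \<forall>j\<in>L i. j < i) \<and> (\<forall>i. 0 < i \<and> i \<le> k \<longrightarrow> L i \<noteq> {})"

definition comm_weight :: "real \<Rightarrow> real \<Rightarrow> real^3 \<Rightarrow> real^3 \<Rightarrow> real" where
  "comm_weight H \<beta> xi xj = H / (1 + (norm (xi - xj))\<^sup>2) powr \<beta>"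

end

theory Submission
  imports Defs "HOL-Real_Asymp.Real_Asymp"
begin

text \<open>
  Measure every agent against the leader, \<open>w\<^sub>i = v\<^sub>i - v\<^sub>0\<close>. By Cauchy-Schwarz,
  \<open>|w\<^sub>i|' \<le> \<gamma>\<^sub>i - \<alpha>\<^sub>i |w\<^sub>i|\<close>, where \<open>\<alpha>\<^sub>i\<close> is the total weight of the leaders of \<open>i\<close>
  and \<open>\<gamma>\<^sub>i = H \<Sum>\<^sub>j |w\<^sub>j| + |f|\<close>. Induction along the hierarchy gives
  \<open>|w\<^sub>i| = O((1 + t) powr -(\<mu> - i))\<close>: the leaders of \<open>i\<close> make
  \<open>\<gamma>\<^sub>i = O((1 + t) powr -(\<mu> - i + 1))\<close> integrable, so \<open>w\<^sub>i\<close> is bounded; then the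
  positions separate at most linearly, so \<open>\<alpha>\<^sub>i \<ge> c (1 + t) powr (-2\<beta>)\<close>. As \<open>2\<beta> < 1\<close>,
  this damping beats the rate \<open>(\<mu> - i) / (1 + t)\<close>, and a comparison with
  \<open>M (1 + t) powr -(\<mu> - i)\<close> gives the decay. Finally \<open>\<mu> - k > 1\<close> makes every relative
  velocity integrable, and the relative positions converge at the rate of the tail integral.
\<close>

section \<open>Comparison principles\<close>

lemma norm_diff_le_of_deriv_le:
  fixes f :: "real \<Rightarrow> 'a::real_inner"
  assumes "a \<le> b" and cont_f: "continuous_on {a..b} f" and cont_g: "continuous_on {a..b} g"
    and f': "\<And>t. a < t \<Longrightarrow> t < b \<Longrightarrow> (f has_vector_derivative f' t) (at t)"
    and g': "\<And>t. a < t \<Longrightarrow> t < b \<Longrightarrow> (g has_real_derivative g' t) (at t)"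
    and le: "\<And>t. a < t \<Longrightarrow> t < b \<Longrightarrow> norm (f' t) \<le> g' t"
  shows "norm (f b - f a) \<le> g b - g a"
proof -
  define u where "u = f b - f a"
  have "norm u * g a - u \<bullet> f a \<le> norm u * g b - u \<bullet> f b"
  proof (rule DERIV_nonneg_imp_increasing_open[OF \<open>a \<le> b\<close>])
    fix t assume t: "a < t" "t < b"
    have "((\<lambda>t. norm u * g t - u \<bullet> f t) has_real_derivative norm u * g' t - u \<bullet> f' t) (at t)"
      using f'[OF t] g'[OF t] unfolding has_vector_derivative_def has_field_derivative_def
      by (auto intro!: derivative_eq_intros simp: fun_eq_iff algebra_simps)
    moreover have "u \<bullet> f' t \<le> norm u * g' t"
      using norm_cauchy_schwarz[of u "f' t"] le[OF t] by (meson mult_left_mono norm_ge_zero order_trans)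
    ultimately show "\<exists>D. ((\<lambda>t. norm u * g t - u \<bullet> f t) has_real_derivative D) (at t) \<and> 0 \<le> D"
      by force
  qed (intro continuous_intros cont_f cont_g)
  then have "u \<bullet> (f b - f a) \<le> norm u * (g b - g a)" by (simp add: inner_diff_right algebra_simps)
  then have "norm u * norm u \<le> norm u * (g b - g a)"
    by (simp add: dot_square_norm power2_eq_square flip: u_def)
  moreover have "g a \<le> g b"
    using g' le by (intro DERIV_nonneg_imp_increasing_open[OF \<open>a \<le> b\<close> _ cont_g])
      (meson norm_ge_zero order_trans)
  ultimately show ?thesis
    by (cases "u = 0") (auto simp: u_def mult_le_cancel_left_pos)
qed

lemma negative_if_decreasing_at_zeros:
  fixes h :: "real \<Rightarrow> real"
  assumes cont: "continuous_on {T..} h" and start: "h T < 0"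
    and decreasing: "\<And>t. t > T \<Longrightarrow> h t = 0 \<Longrightarrow> \<exists>D. (h has_real_derivative D) (at t) \<and> D < 0"
    and "T \<le> t"
  shows "h t < 0"
proof (rule ccontr)
  assume "\<not> h t < 0"
  then have "0 \<le> h t" by simp
  \<comment> \<open>At the first zero \<open>s\<close> of \<open>h\<close> in \<open>[T, t]\<close>, \<open>h' s < 0\<close> makes \<open>h\<close> positive just before \<open>s\<close>,
      so the intermediate value theorem yields an earlier zero.\<close>
  define S where "S = {s \<in> {T..t}. h s = 0}"
  have cont_Tt: "continuous_on {T..t} h" using cont by (rule continuous_on_subset) auto
  have "S \<noteq> {}"
    using IVT'[of h T 0 t] start \<open>0 \<le> h t\<close> \<open>T \<le> t\<close> cont_Tt unfolding S_def by auto
  moreover have bdd: "bdd_below S" unfolding S_def by (rule bdd_belowI[of _ T]) auto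
  moreover have "closed S"
    unfolding S_def by (rule continuous_closed_preimage_constant[OF cont_Tt]) simp
  ultimately have "Inf S \<in> S" by (rule closed_contains_Inf)
  define s where "s = Inf S"
  have s: "T \<le> s" "s \<le> t" "h s = 0" using \<open>Inf S \<in> S\<close> unfolding s_def S_def by auto
  have first: "s \<le> z" if "z \<in> S" for z unfolding s_def using bdd that by (simp add: cInf_lower)
  have "T < s" using s start by (cases "s = T") auto
  then obtain D where D: "(h has_real_derivative D) (at s)" "D < 0" using decreasing s(3) by blast
  obtain d where d: "d > 0" "\<And>e. e > 0 \<Longrightarrow> e < d \<Longrightarrow> h s < h (s - e)"
    using DERIV_neg_dec_left[OF D] by blast
  define e where "e = min (d/2) ((s - T)/2)"
  have e: "e > 0" "e < d" "T < s - e" using d(1) \<open>T < s\<close> unfolding e_def by (auto simp: min_def field_simps)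
  have "continuous_on {T..s-e} h" using cont by (rule continuous_on_subset) auto
  then obtain z where z: "T \<le> z" "z \<le> s - e" "h z = 0"
    using IVT'[of h T 0 "s - e"] start d(2)[OF e(1,2)] s(3) e(3) by auto
  then have "z \<in> S" using s(2) e unfolding S_def by auto
  with first z(2) e(1) show False by fastforce
qed

text \<open>Hypothesis \<open>dissipative\<close> is \<open>|w|' \<le> \<gamma> - \<alpha> |w|\<close> (where \<open>w \<noteq> 0\<close>) in a form that needs no
  derivative of the norm, and \<open>super\<close> makes \<open>\<phi>\<close> a strict supersolution of it.\<close>

lemma norm_less_supersolution:
  fixes w :: "real \<Rightarrow> 'a::real_inner"
  assumes cont_w: "continuous_on {T..} w" and cont_\<phi>: "continuous_on {T..} \<phi>"
    and w': "\<And>t. t > T \<Longrightarrow> (w has_vector_derivative W t) (at t)"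
    and \<phi>': "\<And>t. t > T \<Longrightarrow> (\<phi> has_real_derivative \<phi>' t) (at t)"
    and pos: "\<And>t. t \<ge> T \<Longrightarrow> \<phi> t > 0"
    and start: "norm (w T) < \<phi> T"
    and dissipative: "\<And>t. t > T \<Longrightarrow> w t \<bullet> W t \<le> norm (w t) * (\<gamma> t - \<alpha> t * norm (w t))"
    and super: "\<And>t. t > T \<Longrightarrow> \<gamma> t - \<alpha> t * \<phi> t < \<phi>' t"
    and "T \<le> t"
  shows "norm (w t) < \<phi> t"
proof -
  define h where "h t = w t \<bullet> w t - (\<phi> t)\<^sup>2" for t
  have "h t < 0"
  proof (rule negative_if_decreasing_at_zeros[of T h])
    show "continuous_on {T..} h" unfolding h_def by (intro continuous_intros cont_w cont_\<phi>)
    show "h T < 0"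
      using start pos[of T] unfolding h_def by (simp add: power_strict_mono flip: power2_norm_eq_inner)
    fix s assume s: "T < s" "h s = 0"
    then have norm_eq: "norm (w s) = \<phi> s"
      using pos[of s] by (simp add: h_def power2_eq_iff_nonneg flip: power2_norm_eq_inner)
    have "(h has_real_derivative 2 * (w s \<bullet> W s) - 2 * \<phi> s * \<phi>' s) (at s)"
      using w'[OF s(1)] \<phi>'[OF s(1)] unfolding h_def[abs_def] has_vector_derivative_def
      by (auto intro!: derivative_eq_intros simp: has_field_derivative_def inner_commute algebra_simps)
    moreover have "w s \<bullet> W s < \<phi> s * \<phi>' s"
      using dissipative[OF s(1)] super[OF s(1)] pos[of s] s(1) norm_eq
      by (smt (verit) mult_strict_left_mono)
    ultimately show "\<exists>D. (h has_real_derivative D) (at s) \<and> D < 0" by force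
  qed fact
  then show ?thesis
    using pos[of t] \<open>T \<le> t\<close> unfolding h_def
    by (simp add: power2_less_imp_less less_imp_le flip: power2_norm_eq_inner)
qed

section \<open>Power-law decay on the half-line\<close>

definition decays_with_rate :: "(real \<Rightarrow> 'a::real_normed_vector) \<Rightarrow> real \<Rightarrow> bool" where
  "decays_with_rate g p \<longleftrightarrow> (\<exists>C. \<forall>t\<ge>0. norm (g t) \<le> C * (1 + t) powr (-p))"

lemma decays_with_rateE:
  assumes "decays_with_rate g p"
  obtains C where "0 \<le> C" "\<And>t. 0 \<le> t \<Longrightarrow> norm (g t) \<le> C * (1 + t) powr (-p)"
proof -
  obtain C where C: "\<And>t. 0 \<le> t \<Longrightarrow> norm (g t) \<le> C * (1 + t) powr (-p)"
    using assms unfolding decays_with_rate_def by blast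
  have "norm (g 0) \<le> C" using C[of 0] by simp
  then have "0 \<le> C" using norm_ge_zero order_trans by blast
  with C that show thesis by blast
qed

lemma decays_with_rate_zero_iff: "decays_with_rate g 0 \<longleftrightarrow> (\<exists>B. \<forall>t\<ge>0. norm (g t) \<le> B)"
  unfolding decays_with_rate_def by auto

lemma decays_with_rate_mono:
  assumes "decays_with_rate g p" "q \<le> p"
  shows "decays_with_rate g q"
proof -
  obtain C where "0 \<le> C" and C: "\<And>t. 0 \<le> t \<Longrightarrow> norm (g t) \<le> C * (1 + t) powr (-p)"
    using assms(1) by (rule decays_with_rateE) auto
  have "norm (g t) \<le> C * (1 + t) powr (-q)" if "0 \<le> t" for t
  proof -
    have "(1 + t) powr (-p) \<le> (1 + t) powr (-q)" using assms(2) that by (intro powr_mono) auto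
    from order_trans[OF C[OF that] mult_left_mono[OF this \<open>0 \<le> C\<close>]] show ?thesis .
  qed
  then show ?thesis unfolding decays_with_rate_def by blast
qed

lemma decays_with_rate_add:
  assumes "decays_with_rate g p" "decays_with_rate h p"
  shows "decays_with_rate (\<lambda>t. g t + h t) p"
proof -
  obtain C D where C: "\<And>t. 0 \<le> t \<Longrightarrow> norm (g t) \<le> C * (1 + t) powr (-p)"
    and D: "\<And>t. 0 \<le> t \<Longrightarrow> norm (h t) \<le> D * (1 + t) powr (-p)"
    using assms unfolding decays_with_rate_def by blast
  have "norm (g t + h t) \<le> (C + D) * (1 + t) powr (-p)" if "0 \<le> t" for t
    using norm_triangle_ineq[of "g t" "h t"] C[OF that] D[OF that] distrib_right[of C D "(1 + t) powr (-p)"]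
    by linarith
  then show ?thesis unfolding decays_with_rate_def by blast
qed

lemma decays_with_rate_uminus: "decays_with_rate (\<lambda>t. - g t) p \<longleftrightarrow> decays_with_rate g p"
  unfolding decays_with_rate_def by simp

lemma decays_with_rate_diff:
  assumes "decays_with_rate g p" "decays_with_rate h p"
  shows "decays_with_rate (\<lambda>t. g t - h t) p"
  using decays_with_rate_add[OF assms(1), of "\<lambda>t. - h t"] assms(2)
  by (simp add: decays_with_rate_uminus)

lemma decays_with_rate_sum:
  assumes "\<And>j. j \<in> A \<Longrightarrow> decays_with_rate (g j) p"
  shows "decays_with_rate (\<lambda>t. \<Sum>j\<in>A. g j t) p"
proof -
  obtain C where C: "\<And>j t. j \<in> A \<Longrightarrow> 0 \<le> t \<Longrightarrow> norm (g j t) \<le> C j * (1 + t) powr (-p)"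
    using assms unfolding decays_with_rate_def by metis
  have "norm (\<Sum>j\<in>A. g j t) \<le> (\<Sum>j\<in>A. C j) * (1 + t) powr (-p)" if "0 \<le> t" for t
    using norm_sum[of "\<lambda>j. g j t" A] sum_mono[of A "\<lambda>j. norm (g j t)", OF C[OF _ that]]
    by (simp add: sum_distrib_right)
  then show ?thesis unfolding decays_with_rate_def by blast
qed

lemma decays_with_rate_scaleR:
  assumes "decays_with_rate g p"
  shows "decays_with_rate (\<lambda>t. c *\<^sub>R g t) p"
proof -
  obtain C where C: "\<And>t. 0 \<le> t \<Longrightarrow> norm (g t) \<le> C * (1 + t) powr (-p)"
    using assms unfolding decays_with_rate_def by blast
  have "norm (c *\<^sub>R g t) \<le> (\<bar>c\<bar> * C) * (1 + t) powr (-p)" if "0 \<le> t" for t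
    using mult_left_mono[OF C[OF that], of "\<bar>c\<bar>"] by (simp add: mult.assoc)
  then show ?thesis unfolding decays_with_rate_def by blast
qed

lemma decays_with_rate_norm: "decays_with_rate (\<lambda>t. norm (g t)) p \<longleftrightarrow> decays_with_rate g p"
  unfolding decays_with_rate_def by simp

lemma decays_with_rate_of_eventually:
  fixes g :: "real \<Rightarrow> 'a::real_normed_vector"
  assumes cont: "continuous_on {0..} g" and "0 \<le> p"
    and "\<forall>\<^sub>F t in at_top. norm (g t) \<le> C * (1 + t) powr (-p)"
  shows "decays_with_rate g p"
proof -
  obtain T0 where T0: "\<And>t. T0 \<le> t \<Longrightarrow> norm (g t) \<le> C * (1 + t) powr (-p)"
    using assms(3) unfolding eventually_at_top_linorder by blast
  define T where "T = max T0 0"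
  have "0 \<le> T" and late: "\<And>t. T \<le> t \<Longrightarrow> norm (g t) \<le> C * (1 + t) powr (-p)"
    using T0 unfolding T_def by auto
  have "compact (g ` {0..T})"
    by (rule compact_continuous_image[OF continuous_on_subset[OF cont]]) auto
  then obtain B where B: "\<And>t. t \<in> {0..T} \<Longrightarrow> norm (g t) \<le> B"
    using compact_imp_bounded bounded_iff by (metis imageI)
  define C' where "C' = max C (B * (1 + T) powr p)"
  have "norm (g t) \<le> C' * (1 + t) powr (-p)" if "0 \<le> t" for t
  proof (cases "T \<le> t")
    case True
    have "C * (1 + t) powr (-p) \<le> C' * (1 + t) powr (-p)"
      by (intro mult_right_mono) (auto simp: C'_def)
    with late[OF True] show ?thesis by simp
  next
    case False
    have Bt: "norm (g t) \<le> B" using B False \<open>0 \<le> t\<close> by simp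
    then have "0 \<le> B" using norm_ge_zero order_trans by blast
    moreover have "(1 + t) powr p \<le> (1 + T) powr p" using False \<open>0 \<le> t\<close> \<open>0 \<le> p\<close> by (intro powr_mono2) auto
    ultimately have "B * (1 + t) powr p \<le> B * (1 + T) powr p" by (simp add: mult_left_mono)
    then have "B \<le> B * (1 + T) powr p * (1 + t) powr (-p)"
      using \<open>0 \<le> t\<close> by (simp add: powr_minus field_simps)
    also have "\<dots> \<le> C' * (1 + t) powr (-p)" unfolding C'_def by (simp add: mult_right_mono)
    finally show ?thesis using Bt by simp
  qed
  then show ?thesis unfolding decays_with_rate_def by blast
qed

lemma has_real_derivative_powr_tail:
  assumes "1 < p" "-1 < u"
  shows "((\<lambda>t. - (C / (p - 1) * (1 + t) powr (-(p - 1)))) has_real_derivative C * (1 + u) powr (-p)) (at u)"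
proof -
  have "((\<lambda>t. - (C / (p - 1) * (1 + t) powr (-(p - 1)))) has_real_derivative
      - (C / (p - 1) * (- (p - 1) * (1 + u) powr (- (p - 1) - 1)))) (at u)"
    using assms by (auto intro!: derivative_eq_intros)
  moreover have "- (C / (p - 1) * (- (p - 1) * (1 + u) powr (- (p - 1) - 1))) = C * (1 + u) powr (-p)"
    using assms by (simp add: field_simps)
  ultimately show ?thesis by simp
qed

lemma tendsto_with_rate_of_derivative_decays:
  fixes y w :: "real \<Rightarrow> 'a::{real_inner,complete_space}"
  assumes cont: "continuous_on {0..} y"
    and y': "\<And>t. 0 < t \<Longrightarrow> (y has_vector_derivative w t) (at t)"
    and "decays_with_rate w p" and "1 < p"
  shows "\<exists>d. (y \<longlongrightarrow> d) at_top \<and> decays_with_rate (\<lambda>t. y t - d) (p - 1)"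
proof -
  obtain C where "0 \<le> C" and C: "\<And>t. 0 \<le> t \<Longrightarrow> norm (w t) \<le> C * (1 + t) powr (-p)"
    using assms(3) by (rule decays_with_rateE) auto
  define E where "E t = C / (p - 1) * (1 + t) powr (-(p - 1))" for t
  have tail: "norm (y t - y s) \<le> E s" if "0 \<le> s" "s \<le> t" for s t
  proof -
    have "norm (y t - y s) \<le> (- E t) - (- E s)"
    proof (rule norm_diff_le_of_deriv_le[OF \<open>s \<le> t\<close>])
      show "continuous_on {s..t} y" using cont by (rule continuous_on_subset) (use that in auto)
      show "continuous_on {s..t} (\<lambda>t. - E t)" unfolding E_def using that by (intro continuous_intros) auto
      fix u assume u: "s < u" "u < t"
      show "(y has_vector_derivative w u) (at u)" using y' u that by simp
      show "((\<lambda>t. - E t) has_real_derivative C * (1 + u) powr (-p)) (at u)"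
        unfolding E_def using u that \<open>1 < p\<close> by (intro has_real_derivative_powr_tail) auto
      show "norm (w u) \<le> C * (1 + u) powr (-p)" using C u that by simp
    qed
    moreover have "0 \<le> E t" unfolding E_def using \<open>0 \<le> C\<close> \<open>1 < p\<close> by simp
    ultimately show ?thesis by simp
  qed
  have "(E \<longlongrightarrow> 0) at_top" unfolding E_def using \<open>1 < p\<close> by real_asymp
  have "cauchy_filter (filtermap y at_top)"
    unfolding cauchy_filter_metric_filtermap
  proof (intro allI impI)
    fix \<epsilon> :: real assume "0 < \<epsilon>"
    then obtain N where "0 \<le> N" "E N < \<epsilon> / 2"
      using order_tendstoD(2)[OF \<open>(E \<longlongrightarrow> 0) at_top\<close>, of "\<epsilon> / 2"]
      unfolding eventually_at_top_linorder by (metis half_gt_zero max.cobounded1 max.cobounded2)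
    have "dist (y s) (y t) < \<epsilon>" if "N \<le> s" "N \<le> t" for s t
      using tail[of N s] tail[of N t] that \<open>0 \<le> N\<close> \<open>E N < \<epsilon> / 2\<close>
        dist_triangle2[of "y s" "y t" "y N"] by (simp add: dist_norm)
    then show "\<exists>P. eventually P at_top \<and> (\<forall>s t. P s \<and> P t \<longrightarrow> dist (y s) (y t) < \<epsilon>)"
      by (intro exI[of _ "\<lambda>s. N \<le> s"]) (auto simp: eventually_ge_at_top)
  qed
  then obtain d where "filtermap y at_top \<le> nhds d"
    using cauchy_filter_complete_converges[of "filtermap y at_top" UNIV] complete_UNIV
    by (auto simp: filtermap_bot_iff)
  then have lim: "(y \<longlongrightarrow> d) at_top" unfolding filterlim_def .
  have "norm (d - y s) \<le> E s" if "0 \<le> s" for s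
  proof (rule tendsto_upperbound)
    show "((\<lambda>t. norm (y t - y s)) \<longlongrightarrow> norm (d - y s)) at_top" using lim by (intro tendsto_intros)
    show "\<forall>\<^sub>F t in at_top. norm (y t - y s) \<le> E s"
      using tail[OF that] unfolding eventually_at_top_linorder by blast
  qed simp
  then have "decays_with_rate (\<lambda>t. y t - d) (p - 1)"
    unfolding decays_with_rate_def E_def by (metis norm_minus_commute)
  with lim show ?thesis by blast
qed

section \<open>The flock measured against its leader\<close>

lemma comm_weight_nonneg: "0 \<le> H \<Longrightarrow> 0 \<le> comm_weight H \<beta> xi xj"
  unfolding comm_weight_def by simp

lemma comm_weight_le:
  assumes "0 \<le> H" "0 \<le> \<beta>"
  shows "comm_weight H \<beta> xi xj \<le> H"
proof -
  have "1 \<le> (1 + (norm (xi - xj))\<^sup>2) powr \<beta>" using assms(2) by (intro ge_one_powr_ge_zero) auto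
  then have "H \<le> H * (1 + (norm (xi - xj))\<^sup>2) powr \<beta>"
    using mult_left_mono[of 1 _ H] assms(1) by simp
  moreover have "0 < 1 + (norm (xi - xj))\<^sup>2" by (intro add_pos_nonneg) auto
  ultimately show ?thesis unfolding comm_weight_def by (simp add: divide_le_eq)
qed

lemma comm_weight_lower_bound:
  assumes "0 \<le> H" "0 \<le> \<beta>" "0 \<le> t" and dist: "norm (xi - xj) \<le> K * (1 + t)"
  shows "H * (1 + K\<^sup>2) powr (-\<beta>) * (1 + t) powr (-2 * \<beta>) \<le> comm_weight H \<beta> xi xj"
proof -
  have "(norm (xi - xj))\<^sup>2 \<le> K\<^sup>2 * (1 + t)\<^sup>2"
    using power_mono[OF dist norm_ge_zero, of 2] by (simp add: power_mult_distrib)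
  moreover have "1 \<le> (1 + t)\<^sup>2" using \<open>0 \<le> t\<close> by (simp add: one_le_power)
  ultimately have "1 + (norm (xi - xj))\<^sup>2 \<le> (1 + K\<^sup>2) * (1 + t)\<^sup>2" by (simp add: algebra_simps)
  then have "(1 + (norm (xi - xj))\<^sup>2) powr \<beta> \<le> ((1 + K\<^sup>2) * (1 + t)\<^sup>2) powr \<beta>"
    using \<open>0 \<le> \<beta>\<close> by (intro powr_mono2) auto
  also have "\<dots> = (1 + K\<^sup>2) powr \<beta> * (1 + t) powr (2 * \<beta>)"
    using \<open>0 \<le> t\<close> by (simp add: powr_mult powr_powr flip: powr_numeral)
  finally have "(1 + (norm (xi - xj))\<^sup>2) powr \<beta> \<le> (1 + K\<^sup>2) powr \<beta> * (1 + t) powr (2 * \<beta>)" .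
  moreover have "0 < 1 + (norm (xi - xj))\<^sup>2" "0 < 1 + K\<^sup>2" by (intro add_pos_nonneg; simp)+
  ultimately have "H / ((1 + K\<^sup>2) powr \<beta> * (1 + t) powr (2 * \<beta>)) \<le> comm_weight H \<beta> xi xj"
    unfolding comm_weight_def using \<open>0 \<le> H\<close> \<open>0 \<le> t\<close>
    by (intro divide_left_mono) (auto intro!: mult_pos_pos add_pos_nonneg)
  then show ?thesis by (simp add: powr_minus divide_inverse)
qed

locale hierarchical_flock =
  fixes k :: nat and L :: "nat \<Rightarrow> nat set"
    and x v :: "nat \<Rightarrow> real \<Rightarrow> real^3" and f :: "real \<Rightarrow> real^3"
    and H \<beta> \<mu> :: real
  assumes flock: "hierarchical_leadership k L"
    and H: "H > 0" and beta: "0 < \<beta>" "\<beta> < 1/2"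
    and mu: "\<mu> > real k + 1"
    and f_decay: "\<exists>C. \<forall>t\<ge>0. norm (f t) \<le> C * (1 + t) powr (-\<mu>)"
    and cont_x: "\<And>i. i \<le> k \<Longrightarrow> continuous_on {0..} (x i)"
    and cont_v: "\<And>i. i \<le> k \<Longrightarrow> continuous_on {0..} (v i)"
    and dx: "\<And>i t. i \<le> k \<Longrightarrow> t > 0 \<Longrightarrow> (x i has_vector_derivative v i t) (at t)"
    and dv: "\<And>i t. 1 \<le> i \<Longrightarrow> i \<le> k \<Longrightarrow> t > 0 \<Longrightarrow>
               (v i has_vector_derivative
                  (\<Sum>j\<in>L i. comm_weight H \<beta> (x i t) (x j t) *\<^sub>R (v j t - v i t))) (at t)"
    and dv0: "\<And>t. t > 0 \<Longrightarrow> (v 0 has_vector_derivative f t) (at t)"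
begin

definition rel_pos :: "nat \<Rightarrow> real \<Rightarrow> real^3" where
  "rel_pos i t = x i t - x 0 t"

definition rel_vel :: "nat \<Rightarrow> real \<Rightarrow> real^3" where
  "rel_vel i t = v i t - v 0 t"

definition rel_acc :: "nat \<Rightarrow> real \<Rightarrow> real^3" where
  "rel_acc i t = (\<Sum>j\<in>L i. comm_weight H \<beta> (x i t) (x j t) *\<^sub>R (v j t - v i t)) - f t"

definition damping :: "nat \<Rightarrow> real \<Rightarrow> real" where
  "damping i t = (\<Sum>j\<in>L i. comm_weight H \<beta> (x i t) (x j t))"

definition forcing :: "nat \<Rightarrow> real \<Rightarrow> real" where
  "forcing i t = (\<Sum>j\<in>L i. H * norm (rel_vel j t)) + norm (f t)"

lemma leader_less: "i \<le> k \<Longrightarrow> j \<in> L i \<Longrightarrow> j < i"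
  using flock unfolding hierarchical_leadership_def by blast

lemma finite_leaders: "i \<le> k \<Longrightarrow> finite (L i)"
  using leader_less by (meson finite_lessThan finite_subset lessThan_iff subsetI)

lemma leaders_nonempty: "0 < i \<Longrightarrow> i \<le> k \<Longrightarrow> L i \<noteq> {}"
  using flock unfolding hierarchical_leadership_def by blast

lemma continuous_on_rel_pos: "i \<le> k \<Longrightarrow> continuous_on {0..} (rel_pos i)"
  unfolding rel_pos_def[abs_def] by (intro continuous_intros cont_x) auto

lemma continuous_on_rel_vel: "i \<le> k \<Longrightarrow> continuous_on {0..} (rel_vel i)"
  unfolding rel_vel_def[abs_def] by (intro continuous_intros cont_v) auto

lemma rel_pos_has_vector_derivative:
  "i \<le> k \<Longrightarrow> 0 < t \<Longrightarrow> (rel_pos i has_vector_derivative rel_vel i t) (at t)"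
  unfolding rel_pos_def[abs_def] rel_vel_def by (intro has_vector_derivative_diff dx) auto

lemma rel_vel_has_vector_derivative:
  "1 \<le> i \<Longrightarrow> i \<le> k \<Longrightarrow> 0 < t \<Longrightarrow> (rel_vel i has_vector_derivative rel_acc i t) (at t)"
  unfolding rel_vel_def[abs_def] rel_acc_def by (intro has_vector_derivative_diff dv dv0)

lemma damping_nonneg: "0 \<le> damping i t"
  unfolding damping_def using H by (intro sum_nonneg comm_weight_nonneg) auto

lemma forcing_nonneg: "0 \<le> forcing i t"
  unfolding forcing_def using H by (intro add_nonneg_nonneg sum_nonneg) auto

lemma rel_vel_dissipation:
  "rel_vel i t \<bullet> rel_acc i t \<le> norm (rel_vel i t) * (forcing i t - damping i t * norm (rel_vel i t))"
proof -
  define a where "a j = comm_weight H \<beta> (x i t) (x j t)" for j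
  define w where "w j = rel_vel j t" for j
  have a: "0 \<le> a j" "a j \<le> H" for j
    unfolding a_def using H beta by (auto intro: comm_weight_nonneg comm_weight_le)
  have "rel_vel i t \<bullet> rel_acc i t = (\<Sum>j\<in>L i. a j * (w i \<bullet> w j - (norm (w i))\<^sup>2)) - w i \<bullet> f t"
    unfolding rel_acc_def a_def w_def rel_vel_def
    by (simp add: inner_diff_right inner_sum_right power2_norm_eq_inner algebra_simps)
  also have "\<dots> \<le> (\<Sum>j\<in>L i. H * norm (w j) * norm (w i) - a j * (norm (w i))\<^sup>2) + norm (w i) * norm (f t)"
  proof -
    have "a j * (w i \<bullet> w j) \<le> H * norm (w j) * norm (w i)" for j
    proof -
      have "a j * (w i \<bullet> w j) \<le> a j * (norm (w i) * norm (w j))"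
        by (rule mult_left_mono[OF norm_cauchy_schwarz a(1)])
      also have "\<dots> \<le> H * (norm (w i) * norm (w j))" by (rule mult_right_mono[OF a(2)]) simp
      finally show ?thesis by (simp add: mult_ac)
    qed
    then have "(\<Sum>j\<in>L i. a j * (w i \<bullet> w j - (norm (w i))\<^sup>2))
        \<le> (\<Sum>j\<in>L i. H * norm (w j) * norm (w i) - a j * (norm (w i))\<^sup>2)"
      by (intro sum_mono) (simp add: algebra_simps)
    moreover have "- (w i \<bullet> f t) \<le> norm (w i) * norm (f t)"
      using norm_cauchy_schwarz[of "w i" "- f t"] by simp
    ultimately show ?thesis by linarith
  qed
  also have "\<dots> = norm (rel_vel i t) * (forcing i t - damping i t * norm (rel_vel i t))"
    unfolding forcing_def damping_def a_def w_def
    by (simp add: sum_subtractf sum_distrib_left sum_distrib_right power2_eq_square algebra_simps)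
  finally show ?thesis .
qed


lemma forcing_decays:
  assumes "\<And>j. j \<in> L i \<Longrightarrow> decays_with_rate (rel_vel j) q" and "decays_with_rate f q"
  shows "decays_with_rate (forcing i) q"
proof -
  have "decays_with_rate (\<lambda>t. H *\<^sub>R norm (rel_vel j t)) q" if "j \<in> L i" for j
    using assms(1)[OF that] by (intro decays_with_rate_scaleR) (simp add: decays_with_rate_norm)
  then have "decays_with_rate (\<lambda>t. \<Sum>j\<in>L i. H * norm (rel_vel j t)) q"
    by (intro decays_with_rate_sum) simp
  moreover have "decays_with_rate (\<lambda>t. norm (f t)) q"
    using assms(2) by (simp add: decays_with_rate_norm)
  ultimately show ?thesis unfolding forcing_def[abs_def] by (rule decays_with_rate_add)
qed

lemma rel_vel_bounded:
  assumes i: "1 \<le> i" "i \<le> k" and "1 < q" and "decays_with_rate (forcing i) q"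
  shows "decays_with_rate (rel_vel i) 0"
proof -
  obtain C where "0 \<le> C" and C: "\<And>t. 0 \<le> t \<Longrightarrow> norm (forcing i t) \<le> C * (1 + t) powr (-q)"
    using assms(4) by (rule decays_with_rateE) auto
  \<comment> \<open>\<open>\<phi>\<close> grows by the integral of the strict majorant \<open>(C + 1) (1 + t) powr (-q)\<close> of the forcing.\<close>
  define M where "M = norm (rel_vel i 0) + 1 + (C + 1) / (q - 1)"
  define \<phi> where "\<phi> t = M - (C + 1) / (q - 1) * (1 + t) powr (-(q - 1))" for t
  have \<phi>_le: "\<phi> t \<le> M" for t unfolding \<phi>_def using \<open>0 \<le> C\<close> \<open>1 < q\<close> by simp
  have \<phi>_ge: "norm (rel_vel i 0) + 1 \<le> \<phi> t" if "0 \<le> t" for t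
  proof -
    have "(1 + t) powr (-(q - 1)) \<le> 1" using powr_mono[of "-(q - 1)" 0 "1 + t"] that \<open>1 < q\<close> by simp
    then have "(C + 1) / (q - 1) * (1 + t) powr (-(q - 1)) \<le> (C + 1) / (q - 1)"
      using \<open>0 \<le> C\<close> \<open>1 < q\<close> by (intro mult_left_le) auto
    then show ?thesis unfolding \<phi>_def M_def by simp
  qed
  have "norm (rel_vel i t) < \<phi> t" if "0 \<le> t" for t
  proof (rule norm_less_supersolution[where T = 0 and w = "rel_vel i" and \<phi> = \<phi> and W = "rel_acc i"
        and \<phi>' = "\<lambda>t. (C + 1) * (1 + t) powr (-q)" and \<gamma> = "forcing i" and \<alpha> = "damping i"])
    show "continuous_on {0..} (rel_vel i)" by (rule continuous_on_rel_vel[OF i(2)])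
    show "continuous_on {0..} \<phi>" unfolding \<phi>_def by (intro continuous_intros) auto
    show "(rel_vel i has_vector_derivative rel_acc i s) (at s)" if "0 < s" for s
      using rel_vel_has_vector_derivative[OF i that] .
    show "(\<phi> has_real_derivative (C + 1) * (1 + s) powr (-q)) (at s)" if "0 < s" for s
    proof -
      have "((\<lambda>t. M + - ((C + 1) / (q - 1) * (1 + t) powr (-(q - 1)))) has_real_derivative
          0 + (C + 1) * (1 + s) powr (-q)) (at s)"
        using \<open>1 < q\<close> that by (intro DERIV_add DERIV_const has_real_derivative_powr_tail) auto
      then show ?thesis by (simp add: \<phi>_def[abs_def])
    qed
    show "0 < \<phi> s" if "0 \<le> s" for s using \<phi>_ge[OF that] norm_ge_zero[of "rel_vel i 0"] by linarith
    show "norm (rel_vel i 0) < \<phi> 0" using \<phi>_ge[of 0] by simp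
    show "rel_vel i s \<bullet> rel_acc i s \<le> norm (rel_vel i s) * (forcing i s - damping i s * norm (rel_vel i s))"
      for s by (rule rel_vel_dissipation)
    show "forcing i s - damping i s * \<phi> s < (C + 1) * (1 + s) powr (-q)" if "0 < s" for s
    proof -
      have "forcing i s \<le> C * (1 + s) powr (-q)" using C[of s] that forcing_nonneg[of i s] by simp
      moreover have "0 \<le> damping i s * \<phi> s"
        using \<phi>_ge[of s] that norm_ge_zero[of "rel_vel i 0"]
        by (intro mult_nonneg_nonneg damping_nonneg) linarith
      moreover have "0 < (1 + s) powr (-q)" using that by simp
      ultimately show ?thesis using distrib_right[of C 1 "(1 + s) powr (-q)"] by linarith
    qed
  qed fact
  with \<phi>_le have "\<forall>t\<ge>0. norm (rel_vel i t) \<le> M" by (meson less_imp_le order_trans)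
  then show ?thesis unfolding decays_with_rate_zero_iff by blast
qed

lemma rel_dist_linear_growth:
  assumes "i \<le> k" "j \<le> k" "decays_with_rate (rel_vel i) 0" "decays_with_rate (rel_vel j) 0"
  shows "\<exists>K. \<forall>t\<ge>0. norm (x i t - x j t) \<le> K * (1 + t)"
proof -
  obtain Bi Bj where Bi: "\<And>t. 0 \<le> t \<Longrightarrow> norm (rel_vel i t) \<le> Bi"
    and Bj: "\<And>t. 0 \<le> t \<Longrightarrow> norm (rel_vel j t) \<le> Bj"
    using assms(3,4) unfolding decays_with_rate_zero_iff by blast
  have "0 \<le> Bi + Bj" using Bi[of 0] Bj[of 0] norm_ge_zero[of "rel_vel i 0"] norm_ge_zero[of "rel_vel j 0"]
    by linarith
  define K where "K = norm (x i 0 - x j 0) + Bi + Bj"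
  have "norm (x i t - x j t) \<le> K * (1 + t)" if "0 \<le> t" for t
  proof -
    have "norm ((x i t - x j t) - (x i 0 - x j 0)) \<le> (Bi + Bj) * t - (Bi + Bj) * 0"
    proof (rule norm_diff_le_of_deriv_le[OF that, where f' = "\<lambda>s. v i s - v j s" and g' = "\<lambda>_. Bi + Bj"])
      show "continuous_on {0..t} (\<lambda>s. x i s - x j s)"
        by (intro continuous_on_diff continuous_on_subset[OF cont_x[OF assms(1)]]
            continuous_on_subset[OF cont_x[OF assms(2)]]) auto
      show "continuous_on {0..t} (\<lambda>s. (Bi + Bj) * s)" by (intro continuous_intros)
      fix s assume s: "0 < s" "s < t"
      show "((\<lambda>s. x i s - x j s) has_vector_derivative v i s - v j s) (at s)"
        using dx assms(1,2) s by (intro has_vector_derivative_diff) auto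
      show "((\<lambda>s. (Bi + Bj) * s) has_real_derivative Bi + Bj) (at s)"
        by (auto intro!: derivative_eq_intros)
      have "v i s - v j s = rel_vel i s - rel_vel j s" by (simp add: rel_vel_def)
      then show "norm (v i s - v j s) \<le> Bi + Bj"
        using norm_triangle_ineq4[of "rel_vel i s" "rel_vel j s"] Bi[of s] Bj[of s] s by simp
    qed
    then have "norm (x i t - x j t) \<le> norm (x i 0 - x j 0) + (Bi + Bj) * t"
      using norm_triangle_ineq2[of "x i t - x j t" "x i 0 - x j 0"] by simp
    also have "\<dots> \<le> K * (1 + t)"
      using \<open>0 \<le> Bi + Bj\<close> mult_nonneg_nonneg[OF that norm_ge_zero[of "x i 0 - x j 0"]]
      unfolding K_def by (simp add: algebra_simps)
    finally show ?thesis .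
  qed
  then show ?thesis by blast
qed

lemma damping_lower_bound:
  assumes "i \<le> k" "j \<in> L i" "decays_with_rate (rel_vel i) 0" "decays_with_rate (rel_vel j) 0"
  shows "\<exists>c>0. \<forall>t\<ge>0. c * (1 + t) powr (-2 * \<beta>) \<le> damping i t"
proof -
  have "j \<le> k" using leader_less[OF assms(1,2)] assms(1) by simp
  obtain K where K: "\<And>t. 0 \<le> t \<Longrightarrow> norm (x i t - x j t) \<le> K * (1 + t)"
    using rel_dist_linear_growth[OF assms(1) \<open>j \<le> k\<close> assms(3,4)] by blast
  define c where "c = H * (1 + K\<^sup>2) powr (-\<beta>)"
  have "0 < 1 + K\<^sup>2" by (intro add_pos_nonneg) auto
  then have "0 < c" unfolding c_def using H by simp
  moreover have "c * (1 + t) powr (-2 * \<beta>) \<le> damping i t" if "0 \<le> t" for t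
  proof -
    have "c * (1 + t) powr (-2 * \<beta>) \<le> comm_weight H \<beta> (x i t) (x j t)"
      unfolding c_def using H beta that K[OF that] by (intro comm_weight_lower_bound) auto
    also have "\<dots> \<le> damping i t"
      unfolding damping_def using assms(2) finite_leaders[OF assms(1)] H
      by (intro member_le_sum comm_weight_nonneg) auto
    finally show ?thesis .
  qed
  ultimately show ?thesis by blast
qed

lemma rel_vel_decay_step:
  assumes i: "1 \<le> i" "i \<le> k" and "0 \<le> r" and "decays_with_rate (forcing i) (r + 1)"
    and "0 < c" and damping_bound: "\<And>t. 0 \<le> t \<Longrightarrow> c * (1 + t) powr (-2 * \<beta>) \<le> damping i t"
  shows "decays_with_rate (rel_vel i) r"
proof -
  obtain C where "0 \<le> C" and C: "\<And>t. 0 \<le> t \<Longrightarrow> norm (forcing i t) \<le> C * (1 + t) powr (-(r + 1))"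
    using assms(4) by (rule decays_with_rateE) auto
  \<comment> \<open>As \<open>2 \<beta> < 1\<close>, the damping \<open>c (1 + t) powr (-2 \<beta>)\<close> eventually beats the logarithmic decay
      rate \<open>r / (1 + t)\<close> of the comparison function \<open>M (1 + t) powr (-r)\<close>.\<close>
  have "\<forall>\<^sub>F t in at_top. (r + 1) * (1 + t) powr (-(r + 1)) < c * (1 + t) powr (-(r + 2 * \<beta>))"
    using \<open>0 < c\<close> beta by real_asymp
  then obtain T0 where T0: "\<And>t. T0 \<le> t \<Longrightarrow> (r + 1) * (1 + t) powr (-(r + 1)) < c * (1 + t) powr (-(r + 2 * \<beta>))"
    unfolding eventually_at_top_linorder by blast
  define T where "T = max T0 0"
  define M where "M = C + norm (rel_vel i T) * (1 + T) powr r + 1"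
  define \<phi> where "\<phi> t = M * (1 + t) powr (-r)" for t
  have "0 \<le> T" unfolding T_def by simp
  have "C < M" "0 < M" unfolding M_def using \<open>0 \<le> C\<close> by (simp_all add: add_nonneg_pos)
  have "norm (rel_vel i t) < \<phi> t" if "T \<le> t" for t
  proof (rule norm_less_supersolution[where T = T and w = "rel_vel i" and \<phi> = \<phi> and W = "rel_acc i"
        and \<phi>' = "\<lambda>t. - r * M * (1 + t) powr (-(r + 1))" and \<gamma> = "forcing i" and \<alpha> = "damping i"])
    show "continuous_on {T..} (rel_vel i)"
      using continuous_on_rel_vel[OF i(2)] by (rule continuous_on_subset) (use \<open>0 \<le> T\<close> in auto)
    show "continuous_on {T..} \<phi>" unfolding \<phi>_def using \<open>0 \<le> T\<close> by (intro continuous_intros) auto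
    show "(rel_vel i has_vector_derivative rel_acc i s) (at s)" if "T < s" for s
      using rel_vel_has_vector_derivative[OF i] that \<open>0 \<le> T\<close> by simp
    show "(\<phi> has_real_derivative - r * M * (1 + s) powr (-(r + 1))) (at s)" if "T < s" for s
    proof -
      have "(\<phi> has_real_derivative M * (- r * (1 + s) powr (- r - 1))) (at s)"
        unfolding \<phi>_def[abs_def] using that \<open>0 \<le> T\<close> by (auto intro!: derivative_eq_intros)
      moreover have "- (r + 1) = - r - 1" by simp
      ultimately show ?thesis by (simp only: mult_ac)
    qed
    show "0 < \<phi> s" if "T \<le> s" for s unfolding \<phi>_def using \<open>0 < M\<close> that \<open>0 \<le> T\<close> by simp
    have "M * (1 + T) powr (-r) = (C + 1) * (1 + T) powr (-r) + norm (rel_vel i T)"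
      using \<open>0 \<le> T\<close> by (simp add: M_def algebra_simps powr_minus)
    then show "norm (rel_vel i T) < \<phi> T" unfolding \<phi>_def using \<open>0 \<le> C\<close> \<open>0 \<le> T\<close>
      by (simp add: add_pos_nonneg)
    show "rel_vel i s \<bullet> rel_acc i s \<le> norm (rel_vel i s) * (forcing i s - damping i s * norm (rel_vel i s))"
      for s by (rule rel_vel_dissipation)
    show "forcing i s - damping i s * \<phi> s < - r * M * (1 + s) powr (-(r + 1))" if "T < s" for s
    proof -
      have s: "0 \<le> s" "T0 \<le> s" using that unfolding T_def by auto
      define Q where "Q = (1 + s) powr (-(r + 1))"
      have "forcing i s \<le> C * Q" using C[OF s(1)] forcing_nonneg[of i s] unfolding Q_def by simp
      moreover have "C * Q \<le> M * Q" using \<open>C < M\<close> unfolding Q_def by (simp add: mult_right_mono)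
      moreover have "M * ((r + 1) * Q) < M * (c * (1 + s) powr (-(r + 2 * \<beta>)))"
        using T0[OF s(2)] \<open>0 < M\<close> unfolding Q_def by simp
      moreover have "M * (c * (1 + s) powr (-(r + 2 * \<beta>))) \<le> damping i s * \<phi> s"
      proof -
        have "M * (c * (1 + s) powr (-(r + 2 * \<beta>))) = c * (1 + s) powr (-2 * \<beta>) * \<phi> s"
          unfolding \<phi>_def using s(1) by (simp add: powr_add[symmetric] algebra_simps)
        also have "\<dots> \<le> damping i s * \<phi> s"
          using damping_bound[OF s(1)] \<open>0 < M\<close> unfolding \<phi>_def by (intro mult_right_mono) auto
        finally show ?thesis .
      qed
      ultimately show ?thesis unfolding Q_def by (simp add: algebra_simps)
    qed
  qed fact
  then have "\<forall>\<^sub>F t in at_top. norm (rel_vel i t) \<le> M * (1 + t) powr (-r)"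
    unfolding \<phi>_def eventually_at_top_linorder by (meson less_imp_le)
  then show ?thesis by (rule decays_with_rate_of_eventually[OF continuous_on_rel_vel[OF i(2)] \<open>0 \<le> r\<close>])
qed

lemma rel_vel_decays: "i \<le> k \<Longrightarrow> decays_with_rate (rel_vel i) (\<mu> - i)"
proof (induction i rule: less_induct)
  case (less i)
  show ?case
  proof (cases "i = 0")
    case True
    then have "rel_vel i t = 0" for t by (simp add: rel_vel_def)
    then show ?thesis unfolding decays_with_rate_def by (intro exI[of _ 0]) simp
  next
    case False
    then have i: "1 \<le> i" "i \<le> k" using less.prems by auto
    have leaders: "decays_with_rate (rel_vel j) (\<mu> - i + 1)" if "j \<in> L i" for j
    proof -
      have "j < i" "j \<le> k" using leader_less[OF i(2) that] i by auto
      then show ?thesis by (intro decays_with_rate_mono[OF less.IH]) auto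
    qed
    have "decays_with_rate f \<mu>" using f_decay unfolding decays_with_rate_def .
    then have "decays_with_rate f (\<mu> - i + 1)" by (rule decays_with_rate_mono) (use i in simp)
    with leaders have forcing: "decays_with_rate (forcing i) (\<mu> - i + 1)" by (rule forcing_decays)
    have "1 < \<mu> - i + 1" using mu i by simp
    from rel_vel_bounded[OF i this forcing] have bounded: "decays_with_rate (rel_vel i) 0" .
    have "L i \<noteq> {}" using leaders_nonempty i by simp
    then obtain j where j: "j \<in> L i" by blast
    have "decays_with_rate (rel_vel j) 0"
      using leaders[OF j] by (rule decays_with_rate_mono) (use \<open>1 < \<mu> - i + 1\<close> in simp)
    then obtain c where "0 < c" and damping_bound: "\<And>t. 0 \<le> t \<Longrightarrow> c * (1 + t) powr (-2 * \<beta>) \<le> damping i t"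
      using damping_lower_bound[OF i(2) j bounded] by blast
    have "0 \<le> \<mu> - i" using mu i by simp
    from rel_vel_decay_step[OF i this forcing \<open>0 < c\<close> damping_bound] show ?thesis .
  qed
qed

lemma rel_pos_converges:
  assumes "i \<le> k"
  shows "\<exists>d. (rel_pos i \<longlongrightarrow> d) at_top \<and> decays_with_rate (\<lambda>t. rel_pos i t - d) (\<mu> - k - 1)"
proof -
  have "decays_with_rate (rel_vel i) (\<mu> - k)"
    by (rule decays_with_rate_mono[OF rel_vel_decays[OF assms]]) (use assms in simp)
  moreover have "1 < \<mu> - k" using mu by simp
  ultimately show ?thesis
    using tendsto_with_rate_of_derivative_decays[OF continuous_on_rel_pos[OF assms]
        rel_pos_has_vector_derivative[OF assms]] by simp
qed

end

theorem corollary2: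
  fixes k :: nat and L :: "nat \<Rightarrow> nat set"
    and x v :: "nat \<Rightarrow> real \<Rightarrow> real^3" and f :: "real \<Rightarrow> real^3"
    and H \<beta> \<mu> :: real
  assumes flock: "hierarchical_leadership k L"
    and H: "H > 0" and beta: "0 < \<beta>" "\<beta> < 1/2"
    and mu: "\<mu> > real k + 1"
    and f_decay: "\<exists>C. \<forall>t\<ge>0. norm (f t) \<le> C * (1 + t) powr (-\<mu>)"
    and cont_x: "\<And>i. i \<le> k \<Longrightarrow> continuous_on {0..} (x i)"
    and cont_v: "\<And>i. i \<le> k \<Longrightarrow> continuous_on {0..} (v i)"
    and dx: "\<And>i t. i \<le> k \<Longrightarrow> t > 0 \<Longrightarrow> (x i has_vector_derivative v i t) (at t)"
    and dv: "\<And>i t. 1 \<le> i \<Longrightarrow> i \<le> k \<Longrightarrow> t > 0 \<Longrightarrow>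
               (v i has_vector_derivative
                  (\<Sum>j\<in>L i. comm_weight H \<beta> (x i t) (x j t) *\<^sub>R (v j t - v i t))) (at t)"
    and dv0: "\<And>t. t > 0 \<Longrightarrow> (v 0 has_vector_derivative f t) (at t)"
  shows "\<exists>d :: nat \<Rightarrow> nat \<Rightarrow> real^3. \<forall>i\<le>k. \<forall>j\<le>k.
           ((\<lambda>t. x i t - x j t) \<longlongrightarrow> d i j) at_top \<and>
           (\<exists>C. \<forall>\<^sub>F t in at_top. norm (x i t - x j t - d i j) \<le> C * (1 + t) powr (-(\<mu> - real k - 1)))"
proof -
  interpret hierarchical_flock k L x v f H \<beta> \<mu>
    by unfold_locales (fact assms)+
  obtain d where lim: "\<And>i. i \<le> k \<Longrightarrow> (rel_pos i \<longlongrightarrow> d i) at_top"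
    and rate: "\<And>i. i \<le> k \<Longrightarrow> decays_with_rate (\<lambda>t. rel_pos i t - d i) (\<mu> - k - 1)"
    using rel_pos_converges by metis
  have diff: "x i t - x j t = rel_pos i t - rel_pos j t" for i j t by (simp add: rel_pos_def)
  show ?thesis
  proof (intro exI[of _ "\<lambda>i j. d i - d j"] allI impI conjI)
    fix i j assume "i \<le> k" "j \<le> k"
    show "((\<lambda>t. x i t - x j t) \<longlongrightarrow> d i - d j) at_top"
      unfolding diff using lim \<open>i \<le> k\<close> \<open>j \<le> k\<close> by (intro tendsto_diff)
    have "decays_with_rate (\<lambda>t. (rel_pos i t - d i) - (rel_pos j t - d j)) (\<mu> - k - 1)"
      using decays_with_rate_diff[OF rate rate] \<open>i \<le> k\<close> \<open>j \<le> k\<close> .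
    moreover have "(rel_pos i t - d i) - (rel_pos j t - d j) = x i t - x j t - (d i - d j)" for t
      by (simp add: diff algebra_simps)
    ultimately show "\<exists>C. \<forall>\<^sub>F t in at_top.
        norm (x i t - x j t - (d i - d j)) \<le> C * (1 + t) powr (-(\<mu> - real k - 1))"
      unfolding decays_with_rate_def eventually_at_top_linorder by auto
  qed
qed

end
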